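(* Let $m\ge n$, let $\bar A\in\mathbb R^{m\times n}$, $\bar{\mathbf b}\in\mathbb R^m$, $\bar{\mathbf c}\in\mathbb R^n$ with $\|\bar A\|,\|\bar{\mathbf b}\|,\|\bar{\mathbf c}\|\le1$, let $0<\sigma^2\le1$, and let $A,\mathbf b,\mathbf c$ be obtained by adding independent $N(0,\sigma^2)$ random variables to every entry of $\bar A,\bar{\mathbf b},\bar{\mathbf c}$. Let $\mathcal F$ be the event that the linear program $\max\mathbf c\mathbf x$ s.t. $A\mathbf x\le\mathbf b$, $\mathbf x\ge0$ is feasible and bounded. Then for every $\epsilon>0$, \[ \Pr\left[\beta_P(A,\mathbf b,\mathbf c)\le\frac{\epsilon}{\max(1,\|A\|\,\|\mathbf x^*\|)}\ \text{and}\ \mathcal F\right]\le\frac{4\epsilon m}{\sigma^2}. \]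
   Context: $\|\cdot\|$ is the Euclidean norm for vectors and the spectral norm for matrices. On $\mathcal F$, with probability one the primal program and its dual $\min\mathbf y\mathbf b$ s.t. $\mathbf yA\ge\mathbf c$, $\mathbf y\ge0$ have unique optimal solutions $\mathbf x^*$, $\mathbf y^*$. With $V=\{j:y^*_j>0\}$ and $\bar V$ its complement, $\beta_P(A,\mathbf b,\mathbf c)=\min_{j\in\bar V}(b_j-A_{j,:}\mathbf x^* )$. *)

theory Defs
  imports "HOL-Analysis.Analysis" "HOL-Probability.Probability"
begin

text \<open>Linear program  max c x  s.t.  A x <= b, x >= 0  and its dual
  min y b  s.t.  y A >= c, y >= 0.  Matrices are real^'n^'m (m rows, n columns).\<close>

definition primal_feasible :: "real^'n^'m \<Rightarrow> real^'m \<Rightarrow> real^'n \<Rightarrow> bool" where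
  "primal_feasible A b x \<longleftrightarrow> (\<forall>i. 0 \<le> x $ i) \<and> (\<forall>j. (A *v x) $ j \<le> b $ j)"

definition dual_feasible :: "real^'n^'m \<Rightarrow> real^'n \<Rightarrow> real^'m \<Rightarrow> bool" where
  "dual_feasible A c y \<longleftrightarrow> (\<forall>j. 0 \<le> y $ j) \<and> (\<forall>i. c $ i \<le> (y v* A) $ i)"

definition primal_optimal :: "real^'n^'m \<Rightarrow> real^'m \<Rightarrow> real^'n \<Rightarrow> real^'n \<Rightarrow> bool" where
  "primal_optimal A b c x \<longleftrightarrow> primal_feasible A b x \<and>
     (\<forall>x'. primal_feasible A b x' \<longrightarrow> c \<bullet> x' \<le> c \<bullet> x)"

definition dual_optimal :: "real^'n^'m \<Rightarrow> real^'m \<Rightarrow> real^'n \<Rightarrow> real^'m \<Rightarrow> bool" where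
  "dual_optimal A b c y \<longleftrightarrow> dual_feasible A c y \<and>
     (\<forall>y'. dual_feasible A c y' \<longrightarrow> y \<bullet> b \<le> y' \<bullet> b)"

definition lp_feasible_bounded :: "real^'n^'m \<Rightarrow> real^'m \<Rightarrow> real^'n \<Rightarrow> bool" where
  "lp_feasible_bounded A b c \<longleftrightarrow> (\<exists>x. primal_feasible A b x) \<and>
     (\<exists>M. \<forall>x. primal_feasible A b x \<longrightarrow> c \<bullet> x \<le> M)"

definition opt_x :: "real^'n^'m \<Rightarrow> real^'m \<Rightarrow> real^'n \<Rightarrow> real^'n" where
  "opt_x A b c = (THE x. primal_optimal A b c x)"

definition opt_y :: "real^'n^'m \<Rightarrow> real^'m \<Rightarrow> real^'n \<Rightarrow> real^'m" where
  "opt_y A b c = (THE y. dual_optimal A b c y)"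

text \<open>beta_P = min over j with y*_j = 0 of (b_j - A_j x*); min of the empty set is +infinity.\<close>
definition betaP :: "real^'n^'m \<Rightarrow> real^'m \<Rightarrow> real^'n \<Rightarrow> ereal" where
  "betaP A b c = (INF j \<in> {j. opt_y A b c $ j = 0}.
      ereal (b $ j - (A *v opt_x A b c) $ j))"

definition spec_norm :: "real^'n^'m \<Rightarrow> real" where
  "spec_norm A = onorm (\<lambda>x. A *v x)"

text \<open>Sample space: one real coordinate per entry of A, b, c.\<close>
type_synonym ('m,'n) lp_index = "('m \<times> 'n) + ('m + 'n)"

definition lp_mean :: "real^'n^'m \<Rightarrow> real^'m \<Rightarrow> real^'n \<Rightarrow> ('m,'n) lp_index \<Rightarrow> real" where
  "lp_mean A b c k = (case k of Inl (i, j) \<Rightarrow> A $ i $ j | Inr (Inl i) \<Rightarrow> b $ i | Inr (Inr j) \<Rightarrow> c $ j)"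

definition gauss_perturb ::
  "real^'n^'m \<Rightarrow> real^'m \<Rightarrow> real^'n \<Rightarrow> real \<Rightarrow> (('m,'n) lp_index \<Rightarrow> real) measure" where
  "gauss_perturb A b c \<sigma> =
     PiM UNIV (\<lambda>k. density lborel (normal_density (lp_mean A b c k) \<sigma>))"

definition rA :: "(('m,'n) lp_index \<Rightarrow> real) \<Rightarrow> real^'n^'m" where
  "rA \<omega> = (\<chi> i j. \<omega> (Inl (i, j)))"
definition rb :: "(('m,'n) lp_index \<Rightarrow> real) \<Rightarrow> real^'m" where
  "rb \<omega> = (\<chi> i. \<omega> (Inr (Inl i)))"
definition rc :: "(('m,'n) lp_index \<Rightarrow> real) \<Rightarrow> real^'n" where
  "rc \<omega> = (\<chi> j. \<omega> (Inr (Inr j)))"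

end

theory Submission
  imports Defs
begin

text \<open>
  The event is covered by the sets E_j (one per row j) of data whose optimal pair (x*, y*)
  is unique and satisfies y*_j = 0 and b_j - A_j x* \<le> \<epsilon>. Increasing b_j alone keeps
  y* optimal (since y*_j = 0) and keeps x* feasible, hence optimal; by strict complementarity
  the optimum is still x*, so the slack of row j grows by exactly the increase of b_j. Every line in
  the b_j-direction therefore meets E_j in a set of diameter at most \<epsilon>, and as the density of b_j
  is at most 1/\<sigma>, Fubini gives Pr[E_j] \<le> 2\<epsilon>/\<sigma>. Summing over j yields 2\<epsilon>m/\<sigma> \<le> 4\<epsilon>m/\<sigma>^2.
\<close>

section \<open>Optimality conditions for linear programs in inequality form\<close>

definition lp_multiplier ::
  "('r::finite \<Rightarrow> 'a::real_inner) \<Rightarrow> ('r \<Rightarrow> real) \<Rightarrow> 'a \<Rightarrow> 'a \<Rightarrow> ('r \<Rightarrow> real) \<Rightarrow> bool" where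
  "lp_multiplier G h c x w \<longleftrightarrow>
     (\<forall>r. 0 \<le> w r) \<and> (\<Sum>r\<in>UNIV. w r *\<^sub>R G r) = c \<and> (\<Sum>r\<in>UNIV. w r * h r) = c \<bullet> x"

lemma sum_scaleR_eq_imp_sum_inner:
  assumes "(\<Sum>r\<in>UNIV. w r *\<^sub>R G r) = c"
  shows "(\<Sum>r\<in>UNIV. w r * (G r \<bullet> d)) = c \<bullet> d"
  using assms by (auto simp: inner_sum_left)

lemma multiplier_weak_duality:
  fixes G :: "'r::finite \<Rightarrow> 'a::real_inner"
  assumes "\<forall>r. 0 \<le> w r" and "(\<Sum>r\<in>UNIV. w r *\<^sub>R G r) = c" and "\<forall>r. G r \<bullet> x \<le> h r"
  shows "c \<bullet> x \<le> (\<Sum>r\<in>UNIV. w r * h r)"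
proof -
  have "c \<bullet> x = (\<Sum>r\<in>UNIV. w r * (G r \<bullet> x))"
    using sum_scaleR_eq_imp_sum_inner[OF assms(2)] by simp
  also have "\<dots> \<le> (\<Sum>r\<in>UNIV. w r * h r)"
    using assms(1,3) by (intro sum_mono mult_left_mono) auto
  finally show ?thesis .
qed

lemma lp_multiplier_complementary:
  fixes G :: "'r::finite \<Rightarrow> 'a::real_inner"
  assumes w: "lp_multiplier G h c x w" and feas: "\<forall>r. G r \<bullet> x' \<le> h r" and "c \<bullet> x \<le> c \<bullet> x'"
  shows "w r * (G r \<bullet> x') = w r * h r"
proof -
  have nonneg: "\<And>s. 0 \<le> w s * (h s - G s \<bullet> x')"
    using w feas by (simp add: lp_multiplier_def)
  have "(\<Sum>s\<in>UNIV. w s * (h s - G s \<bullet> x')) = c \<bullet> x - c \<bullet> x'"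
    using w sum_scaleR_eq_imp_sum_inner[of w G c x']
    by (simp add: lp_multiplier_def right_diff_distrib sum_subtractf)
  also have "\<dots> \<le> 0" using assms(3) by simp
  moreover have "0 \<le> (\<Sum>s\<in>UNIV. w s * (h s - G s \<bullet> x'))"
    by (intro sum_nonneg nonneg)
  ultimately have "(\<Sum>s\<in>UNIV. w s * (h s - G s \<bullet> x')) = 0" by linarith
  then have "w r * (h r - G r \<bullet> x') = 0"
    using nonneg by (simp add: sum_nonneg_eq_0_iff)
  then show ?thesis by (auto simp: right_diff_distrib)
qed

lemma lp_multiplier_seminorm_eq_0:
  fixes G :: "'r::finite \<Rightarrow> 'a::real_inner"
  assumes w: "lp_multiplier G h c x w" and "\<forall>r. G r \<bullet> x \<le> h r" "\<forall>r. G r \<bullet> x' \<le> h r"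
    and "c \<bullet> x \<le> c \<bullet> x'"
  shows "(\<Sum>r\<in>UNIV. w r * \<bar>G r \<bullet> (x' - x)\<bar>) = 0"
proof (intro sum.neutral ballI)
  fix r
  have "w r * (G r \<bullet> x') = w r * (G r \<bullet> x)"
    using lp_multiplier_complementary[OF w, of x' r] lp_multiplier_complementary[OF w, of x r] assms
    by auto
  moreover have "0 \<le> w r" using w by (simp add: lp_multiplier_def)
  ultimately show "w r * \<bar>G r \<bullet> (x' - x)\<bar> = 0"
    by (simp add: inner_diff_right right_diff_distrib abs_mult[symmetric])
qed

lemma feasible_step_exists:
  fixes G :: "'r::finite \<Rightarrow> 'a::real_inner"
  assumes feas: "\<forall>r. G r \<bullet> x \<le> h r" and tight: "\<And>r. G r \<bullet> x = h r \<Longrightarrow> G r \<bullet> d \<le> 0"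
  shows "\<exists>\<delta>>0. \<forall>r. G r \<bullet> (x + \<delta> *\<^sub>R d) \<le> h r"
proof -
  have "\<forall>\<^sub>F \<delta> in at_right 0. G r \<bullet> (x + \<delta> *\<^sub>R d) \<le> h r" for r
  proof (cases "G r \<bullet> x = h r")
    case True
    show ?thesis
      using eventually_at_right_less[of 0]
    proof (rule eventually_mono)
      fix \<delta> :: real assume "0 < \<delta>"
      then show "G r \<bullet> (x + \<delta> *\<^sub>R d) \<le> h r"
        using True tight[OF True] by (simp add: inner_add_right mult_nonneg_nonpos)
    qed
  next
    case False
    then have "G r \<bullet> x < h r" using feas by (simp add: order_less_le)
    moreover have "((\<lambda>\<delta>. G r \<bullet> (x + \<delta> *\<^sub>R d)) \<longlongrightarrow> G r \<bullet> x) (at_right 0)"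
      by (intro tendsto_eq_intros) auto
    ultimately show ?thesis
      by (auto dest: order_tendstoD(2) elim!: eventually_mono)
  qed
  then have "\<forall>\<^sub>F \<delta> in at_right 0. 0 < \<delta> \<and> (\<forall>r. G r \<bullet> (x + \<delta> *\<^sub>R d) \<le> h r)"
    by (intro eventually_conj eventually_at_right_less eventually_all_finite) auto
  then show ?thesis
    using eventually_happens'[OF trivial_limit_at_right_real] by blast
qed

lemma convex_cone_hull_image_subset:
  fixes G :: "'r::finite \<Rightarrow> 'a::real_vector"
  shows "convex_cone hull (G ` T) \<subseteq>
    {\<Sum>r\<in>UNIV. w r *\<^sub>R G r | w. (\<forall>r. 0 \<le> w r) \<and> (\<forall>r. r \<notin> T \<longrightarrow> w r = 0)}"
    (is "_ \<subseteq> ?C")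
proof (rule hull_minimal)
  show "G ` T \<subseteq> ?C"
  proof
    fix g assume "g \<in> G ` T"
    then obtain r0 where "r0 \<in> T" "g = G r0" by blast
    moreover have "(\<Sum>r\<in>UNIV. (if r = r0 then 1 else 0) *\<^sub>R G r) = G r0"
      by (simp add: if_distrib[of "\<lambda>t. t *\<^sub>R _"] cong: if_cong)
    ultimately show "g \<in> ?C"
      by (intro CollectI exI[of _ "\<lambda>r. if r = r0 then 1 else 0"]) auto
  qed
  show "convex_cone ?C"
    unfolding convex_cone_iff
  proof (intro conjI ballI allI impI)
    show "0 \<in> ?C" by (intro CollectI exI[of _ "\<lambda>_. 0"]) simp
  next
    fix u v assume "u \<in> ?C" "v \<in> ?C"
    then obtain wu wv where "u = (\<Sum>r\<in>UNIV. wu r *\<^sub>R G r)" "\<forall>r. 0 \<le> wu r" "\<forall>r. r \<notin> T \<longrightarrow> wu r = 0"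
      "v = (\<Sum>r\<in>UNIV. wv r *\<^sub>R G r)" "\<forall>r. 0 \<le> wv r" "\<forall>r. r \<notin> T \<longrightarrow> wv r = 0"
      by blast
    then show "u + v \<in> ?C"
      by (intro CollectI exI[of _ "\<lambda>r. wu r + wv r"]) (auto simp: sum.distrib scaleR_add_left)
  next
    fix u and t :: real assume "u \<in> ?C" "0 \<le> t"
    then obtain wu where "u = (\<Sum>r\<in>UNIV. wu r *\<^sub>R G r)" "\<forall>r. 0 \<le> wu r" "\<forall>r. r \<notin> T \<longrightarrow> wu r = 0"
      by blast
    with \<open>0 \<le> t\<close> show "t *\<^sub>R u \<in> ?C"
      by (intro CollectI exI[of _ "\<lambda>r. t * wu r"]) (auto simp: scaleR_sum_right)
  qed
qed

lemma optimal_imp_cone_hull_tight_rows: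
  fixes G :: "'r::finite \<Rightarrow> 'a::euclidean_space"
  assumes feas: "\<forall>r. G r \<bullet> x \<le> h r"
    and opt: "\<And>x'. \<forall>r. G r \<bullet> x' \<le> h r \<Longrightarrow> c \<bullet> x' \<le> c \<bullet> x"
  shows "c \<in> convex_cone hull (G ` {r. G r \<bullet> x = h r})"
proof (rule ccontr)
  define C where "C = convex_cone hull (G ` {r. G r \<bullet> x = h r})"
  assume "c \<notin> convex_cone hull (G ` {r. G r \<bullet> x = h r})"
  moreover have "convex C" "closed C"
    by (simp_all add: C_def convex_convex_cone_hull closed_convex_cone_hull)
  ultimately obtain a \<beta> where sep: "a \<bullet> c < \<beta>" "\<forall>z\<in>C. \<beta> < a \<bullet> z"
    using separating_hyperplane_closed_point by (metis C_def)
  have "0 \<in> C" by (simp add: C_def convex_cone_hull_contains_0)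
  with sep(2) have "\<beta> < 0" by auto
  \<comment> \<open>Since C is a cone, the separating functional is nonnegative on C.\<close>
  have "0 \<le> a \<bullet> G r" if "G r \<bullet> x = h r" for r
  proof (rule ccontr)
    assume neg: "\<not> 0 \<le> a \<bullet> G r"
    have "(\<beta> / (a \<bullet> G r)) *\<^sub>R G r \<in> C"
      using that neg \<open>\<beta> < 0\<close> unfolding C_def
      by (intro convex_cone_hull_mul hull_inc) (auto simp: divide_nonpos_neg)
    with sep(2) neg show False by auto
  qed
  then obtain \<delta> where \<delta>: "0 < \<delta>" "\<forall>r. G r \<bullet> (x + \<delta> *\<^sub>R (- a)) \<le> h r"
    using feasible_step_exists[OF feas, of "- a"] by (auto simp: inner_commute)
  have "c \<bullet> (x + \<delta> *\<^sub>R (- a)) = c \<bullet> x + \<delta> * (- (a \<bullet> c))"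
    by (simp add: inner_diff_right inner_commute)
  moreover have "0 < \<delta> * (- (a \<bullet> c))" using \<delta>(1) sep(1) \<open>\<beta> < 0\<close> by (simp add: mult_pos_neg)
  ultimately show False using opt[OF \<delta>(2)] by simp
qed

lemma optimal_imp_lp_multiplier:
  fixes G :: "'r::finite \<Rightarrow> 'a::euclidean_space"
  assumes feas: "\<forall>r. G r \<bullet> x \<le> h r"
    and opt: "\<And>x'. \<forall>r. G r \<bullet> x' \<le> h r \<Longrightarrow> c \<bullet> x' \<le> c \<bullet> x"
  shows "\<exists>w. lp_multiplier G h c x w"
proof -
  obtain w where w: "c = (\<Sum>r\<in>UNIV. w r *\<^sub>R G r)" "\<forall>r. 0 \<le> w r"
    and supp: "\<forall>r. G r \<bullet> x \<noteq> h r \<longrightarrow> w r = 0"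
    using convex_cone_hull_image_subset optimal_imp_cone_hull_tight_rows[OF feas opt] by blast
  have "(\<Sum>r\<in>UNIV. w r * h r) = (\<Sum>r\<in>UNIV. w r * (G r \<bullet> x))"
    using supp by (intro sum.cong) auto
  also have "\<dots> = c \<bullet> x" using sum_scaleR_eq_imp_sum_inner w(1) by metis
  finally show ?thesis using w unfolding lp_multiplier_def by blast
qed

lemma sum_UNIV_option:
  fixes f :: "'a::finite option \<Rightarrow> 'b::comm_monoid_add"
  shows "(\<Sum>s\<in>UNIV. f s) = f None + (\<Sum>k\<in>UNIV. f (Some k))"
  by (simp add: UNIV_option_conv sum.reindex)

text \<open>Goldman--Tucker: x, the only point of the optimal face, maximises -G r on it, and the
  multipliers of that auxiliary program (with the extra row -c) form the certificate.\<close>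

lemma unique_optimum_imp_tight_row_certificate:
  fixes G :: "'r::finite \<Rightarrow> 'a::euclidean_space"
  assumes feas: "\<forall>s. G s \<bullet> x \<le> h s"
    and uniq: "\<And>x'. \<forall>s. G s \<bullet> x' \<le> h s \<Longrightarrow> c \<bullet> x \<le> c \<bullet> x' \<Longrightarrow> x' = x"
    and tight: "G r \<bullet> x = h r"
  shows "\<exists>\<theta>\<ge>0. \<exists>v. (\<forall>s. 0 \<le> v s) \<and> 0 < v r \<and>
    (\<Sum>s\<in>UNIV. v s *\<^sub>R G s) = \<theta> *\<^sub>R c \<and> (\<Sum>s\<in>UNIV. v s * h s) = \<theta> * (c \<bullet> x)"
proof -
  define G' where "G' s = (case s of None \<Rightarrow> - c | Some s \<Rightarrow> G s)" for s
  define h' where "h' s = (case s of None \<Rightarrow> - (c \<bullet> x) | Some s \<Rightarrow> h s)" for s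
  have "\<forall>s. G' s \<bullet> x \<le> h' s"
    using feas by (simp add: G'_def h'_def split: option.split)
  moreover have "- G r \<bullet> x' \<le> - G r \<bullet> x" if "\<forall>s. G' s \<bullet> x' \<le> h' s" for x'
    using that[rule_format, of None] that[rule_format, of "Some _"] uniq[of x']
    by (simp add: G'_def h'_def)
  ultimately obtain w where w: "lp_multiplier G' h' (- G r) x w"
    using optimal_imp_lp_multiplier by blast
  define v where "v s = w (Some s) + (if s = r then 1 else 0)" for s
  have "- (w None *\<^sub>R c) + (\<Sum>s\<in>UNIV. w (Some s) *\<^sub>R G s) = - G r"
    using w by (simp add: lp_multiplier_def sum_UNIV_option G'_def)
  then have G_sum: "(\<Sum>s\<in>UNIV. w (Some s) *\<^sub>R G s) = w None *\<^sub>R c - G r"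
    by (simp add: algebra_simps)
  have "- (w None * (c \<bullet> x)) + (\<Sum>s\<in>UNIV. w (Some s) * h s) = - h r"
    using w tight by (simp add: lp_multiplier_def sum_UNIV_option h'_def)
  then have h_sum: "(\<Sum>s\<in>UNIV. w (Some s) * h s) = w None * (c \<bullet> x) - h r"
    by linarith
  have "(\<Sum>s\<in>UNIV. v s *\<^sub>R G s) = w None *\<^sub>R c"
    using G_sum by (simp add: v_def scaleR_add_left sum.distrib if_distrib[of "\<lambda>t. t *\<^sub>R _"] cong: if_cong)
  moreover have "(\<Sum>s\<in>UNIV. v s * h s) = w None * (c \<bullet> x)"
    using h_sum by (simp add: v_def distrib_right sum.distrib if_distrib[of "\<lambda>t. t * _"] cong: if_cong)
  moreover have "\<forall>s. 0 \<le> v s" "0 < v r" "0 \<le> w None"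
    using w by (auto simp: lp_multiplier_def v_def add_nonneg_pos)
  ultimately show ?thesis by blast
qed

lemma unique_optimum_imp_positive_multiplier:
  fixes G :: "'r::finite \<Rightarrow> 'a::euclidean_space"
  assumes feas: "\<forall>s. G s \<bullet> x \<le> h s"
    and uniq: "\<And>x'. \<forall>s. G s \<bullet> x' \<le> h s \<Longrightarrow> c \<bullet> x \<le> c \<bullet> x' \<Longrightarrow> x' = x"
    and tight: "G r \<bullet> x = h r"
  shows "\<exists>w. lp_multiplier G h c x w \<and> 0 < w r"
proof -
  have "c \<bullet> x' \<le> c \<bullet> x" if "\<forall>s. G s \<bullet> x' \<le> h s" for x'
    using uniq[OF that] by force
  then obtain w0 where w0: "lp_multiplier G h c x w0"
    using optimal_imp_lp_multiplier[OF feas] by blast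
  obtain \<theta> v where "0 \<le> \<theta>" and v: "\<forall>s. 0 \<le> v s" "0 < v r"
    "(\<Sum>s\<in>UNIV. v s *\<^sub>R G s) = \<theta> *\<^sub>R c" "(\<Sum>s\<in>UNIV. v s * h s) = \<theta> * (c \<bullet> x)"
    using unique_optimum_imp_tight_row_certificate[OF feas uniq tight] by blast
  show ?thesis
  proof (cases "\<theta> = 0")
    case True
    with w0 v have "lp_multiplier G h c x (\<lambda>s. w0 s + v s)"
      by (simp add: lp_multiplier_def scaleR_add_left distrib_right sum.distrib)
    moreover have "0 < w0 r + v r" using w0 v by (simp add: lp_multiplier_def add_nonneg_pos)
    ultimately show ?thesis by blast
  next
    case False
    with \<open>0 \<le> \<theta>\<close> have "0 < \<theta>" by simp
    have "(\<Sum>s\<in>UNIV. (v s / \<theta>) *\<^sub>R G s) = (1 / \<theta>) *\<^sub>R (\<Sum>s\<in>UNIV. v s *\<^sub>R G s)"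
      by (simp add: scaleR_sum_right)
    moreover have "(\<Sum>s\<in>UNIV. v s / \<theta> * h s) = (\<Sum>s\<in>UNIV. v s * h s) / \<theta>"
      by (simp add: sum_divide_distrib)
    ultimately have "lp_multiplier G h c x (\<lambda>s. v s / \<theta>)"
      using v \<open>0 < \<theta>\<close> by (simp add: lp_multiplier_def)
    moreover have "0 < v r / \<theta>" using v \<open>0 < \<theta>\<close> by simp
    ultimately show ?thesis by blast
  qed
qed

lemma positively_homogeneous_ge_norm:
  fixes f :: "'a::euclidean_space \<Rightarrow> real"
  assumes cont: "continuous_on UNIV f" and hom: "\<And>t d. f (t *\<^sub>R d) = \<bar>t\<bar> * f d"
    and pos: "\<And>d. d \<noteq> 0 \<Longrightarrow> 0 < f d"
  shows "\<exists>\<mu>>0. \<forall>d. \<mu> * norm d \<le> f d"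
proof -
  obtain d1 :: 'a where "norm d1 = 1" using vector_choose_size[of 1] by auto
  then have "sphere (0::'a) 1 \<noteq> {}" by auto
  then obtain d0 where d0: "d0 \<in> sphere 0 1" "\<forall>d\<in>sphere 0 1. f d0 \<le> f d"
    using continuous_attains_inf[OF compact_sphere _ continuous_on_subset[OF cont subset_UNIV]]
    by blast
  have "f d0 * norm d \<le> f d" for d
  proof (cases "d = 0")
    case True
    then show ?thesis using hom[of 0 0] by simp
  next
    case False
    then have "f d0 \<le> f ((1 / norm d) *\<^sub>R d)" using d0(2) by simp
    also have "\<dots> = f d / norm d" by (simp add: hom)
    finally show ?thesis using False by (simp add: field_simps)
  qed
  moreover have "0 < f d0" using d0(1) by (intro pos) auto
  ultimately show ?thesis by blast
qed

lemma strictly_complementary_multiplier_coercive: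
  fixes G :: "'r::finite \<Rightarrow> 'a::euclidean_space"
  assumes feas: "\<forall>r. G r \<bullet> x \<le> h r"
    and uniq: "\<And>x'. \<forall>r. G r \<bullet> x' \<le> h r \<Longrightarrow> c \<bullet> x \<le> c \<bullet> x' \<Longrightarrow> x' = x"
    and w: "lp_multiplier G h c x w" and strict: "\<And>r. G r \<bullet> x = h r \<Longrightarrow> 0 < w r"
  shows "\<exists>\<mu>>0. \<forall>d. \<mu> * norm d \<le> (\<Sum>r\<in>UNIV. w r * \<bar>G r \<bullet> d\<bar>)"
proof (rule positively_homogeneous_ge_norm)
  show "continuous_on UNIV (\<lambda>d. \<Sum>r\<in>UNIV. w r * \<bar>G r \<bullet> d\<bar>)"
    by (intro continuous_intros)
  show "(\<Sum>r\<in>UNIV. w r * \<bar>G r \<bullet> t *\<^sub>R d\<bar>) = \<bar>t\<bar> * (\<Sum>r\<in>UNIV. w r * \<bar>G r \<bullet> d\<bar>)" for t d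
    by (simp add: abs_mult sum_distrib_left mult.left_commute)
  fix d :: 'a assume "d \<noteq> 0"
  have w0: "\<And>r. 0 \<le> w r" using w by (simp add: lp_multiplier_def)
  show "0 < (\<Sum>r\<in>UNIV. w r * \<bar>G r \<bullet> d\<bar>)"
  proof (rule ccontr)
    assume "\<not> ?thesis"
    moreover have "0 \<le> (\<Sum>r\<in>UNIV. w r * \<bar>G r \<bullet> d\<bar>)"
      using w0 by (intro sum_nonneg) simp
    ultimately have "(\<Sum>r\<in>UNIV. w r * \<bar>G r \<bullet> d\<bar>) = 0" by linarith
    then have zero: "w r * (G r \<bullet> d) = 0" for r
      using w0 by (simp add: sum_nonneg_eq_0_iff)
    have "G r \<bullet> d \<le> 0" if "G r \<bullet> x = h r" for r
      using zero[of r] strict[OF that] by simp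
    then obtain \<delta> where \<delta>: "0 < \<delta>" "\<forall>r. G r \<bullet> (x + \<delta> *\<^sub>R d) \<le> h r"
      using feasible_step_exists[OF feas] by blast
    have "c \<bullet> d = 0"
      using sum_scaleR_eq_imp_sum_inner[of w G c d] w zero by (simp add: lp_multiplier_def)
    then have "x + \<delta> *\<^sub>R d = x" using \<delta>(2) by (intro uniq) (simp_all add: inner_add_right)
    with \<delta>(1) \<open>d \<noteq> 0\<close> show False by simp
  qed
qed

section \<open>The primal--dual pair  max c x, A x \<le> b, x \<ge> 0\<close>

text \<open>The constraints x \<ge> 0 become the rows -e_i with right-hand side 0; a dual vector y
  corresponds to the multipliers (y, yA - c) of all rows.\<close>

definition lp_row :: "real^'n^'m \<Rightarrow> 'm + 'n \<Rightarrow> real^'n" where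
  "lp_row A r = (case r of Inl k \<Rightarrow> A $ k | Inr i \<Rightarrow> - axis i 1)"

definition lp_rhs :: "real^'m \<Rightarrow> 'm + 'n \<Rightarrow> real" where
  "lp_rhs b r = (case r of Inl k \<Rightarrow> b $ k | Inr i \<Rightarrow> 0)"

definition lp_weights :: "real^'n::finite^'m::finite \<Rightarrow> real^'n \<Rightarrow> real^'m \<Rightarrow> 'm + 'n \<Rightarrow> real" where
  "lp_weights A c y r = (case r of Inl k \<Rightarrow> y $ k | Inr i \<Rightarrow> (y v* A) $ i - c $ i)"

definition dual_seminorm :: "real^'n::finite^'m::finite \<Rightarrow> real^'n \<Rightarrow> real^'m \<Rightarrow> real^'n \<Rightarrow> real" where
  "dual_seminorm A c y d = (\<Sum>r\<in>UNIV. lp_weights A c y r * \<bar>lp_row A r \<bullet> d\<bar>)"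

definition optimal_pair :: "real^'n::finite^'m::finite \<Rightarrow> real^'m \<Rightarrow> real^'n \<Rightarrow> real^'n \<Rightarrow> real^'m \<Rightarrow> bool" where
  "optimal_pair A b c x y \<longleftrightarrow> primal_feasible A b x \<and> dual_feasible A c y \<and> y \<bullet> b \<le> c \<bullet> x"

lemma lp_row_inner [simp]:
  "lp_row A (Inl k) \<bullet> x = (A *v x) $ k"
  "lp_row A (Inr i) \<bullet> x = - (x $ i)"
  by (simp add: lp_row_def matrix_vector_mul_component)
    (simp add: lp_row_def cart_eq_inner_axis inner_commute)

lemma lp_rhs_simps [simp]: "lp_rhs b (Inl k) = b $ k" "lp_rhs b (Inr i) = 0"
  by (simp_all add: lp_rhs_def)

lemma lp_weights_simps [simp]:
  "lp_weights A c y (Inl k) = y $ k" "lp_weights A c y (Inr i) = (y v* A) $ i - c $ i"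
  by (simp_all add: lp_weights_def)

lemma primal_feasible_iff_rows: "primal_feasible A b x \<longleftrightarrow> (\<forall>r. lp_row A r \<bullet> x \<le> lp_rhs b r)"
  by (auto simp: primal_feasible_def split_sum_all)

lemma dual_feasible_iff_weights: "dual_feasible A c y \<longleftrightarrow> (\<forall>r. 0 \<le> lp_weights A c y r)"
  by (auto simp: dual_feasible_def split_sum_all)

lemma sum_UNIV_Plus:
  fixes f :: "'a::finite + 'b::finite \<Rightarrow> 'c::comm_monoid_add"
  shows "(\<Sum>r\<in>UNIV. f r) = (\<Sum>k\<in>UNIV. f (Inl k)) + (\<Sum>i\<in>UNIV. f (Inr i))"
  using sum.Plus[of "UNIV::'a set" "UNIV::'b set" f] by (simp add: comp_def)

lemma sum_scaleR_lp_row_nth: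
  fixes A :: "real^'n::finite^'m::finite"
  shows "(\<Sum>r\<in>UNIV. w r *\<^sub>R lp_row A r) $ i = ((\<chi> k. w (Inl k)) v* A) $ i - w (Inr i)"
proof -
  have "(\<Sum>l\<in>UNIV. w (Inr l) * axis l (1::real) $ i) = w (Inr i)"
    by (simp add: axis_def if_distrib[of "\<lambda>t. _ * t"] cong: if_cong)
  then show ?thesis
    by (simp add: sum_UNIV_Plus lp_row_def sum_subtractf sum_negf vector_matrix_mult_def)
qed

lemma sum_lp_weights_rows: "(\<Sum>r\<in>UNIV. lp_weights A c y r *\<^sub>R lp_row A r) = c"
proof -
  have "(\<Sum>r\<in>UNIV. lp_weights A c y r *\<^sub>R lp_row A r) $ i = c $ i" for i
    by (simp only: sum_scaleR_lp_row_nth) simp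
  then show ?thesis unfolding vec_eq_iff by blast
qed

lemma sum_lp_weights_rhs: "(\<Sum>r\<in>UNIV. lp_weights A c y r * lp_rhs b r) = y \<bullet> b"
  by (simp add: sum_UNIV_Plus inner_vec_def)

lemma lp_weights_of_multiplier:
  fixes A :: "real^'n::finite^'m::finite"
  assumes "(\<Sum>r\<in>UNIV. w r *\<^sub>R lp_row A r) = c"
  shows "w = lp_weights A c (\<chi> k. w (Inl k))"
proof
  fix r show "w r = lp_weights A c (\<chi> k. w (Inl k)) r"
    using assms sum_scaleR_lp_row_nth[of w A] by (cases r) auto
qed

lemma weak_duality:
  assumes "primal_feasible A b x" and "dual_feasible A c y"
  shows "c \<bullet> x \<le> y \<bullet> b"
  using multiplier_weak_duality[OF _ sum_lp_weights_rows, of A c y x "lp_rhs b"] assms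
  by (simp add: primal_feasible_iff_rows dual_feasible_iff_weights sum_lp_weights_rhs)

lemma optimal_pair_imp_lp_multiplier:
  assumes "optimal_pair A b c x y"
  shows "lp_multiplier (lp_row A) (lp_rhs b) c x (lp_weights A c y)"
  using assms weak_duality[of A b x c y]
  by (auto simp: optimal_pair_def lp_multiplier_def dual_feasible_iff_weights
      sum_lp_weights_rows sum_lp_weights_rhs)

lemma lp_multiplier_imp_optimal_pair:
  assumes "primal_feasible A b x" and w: "lp_multiplier (lp_row A) (lp_rhs b) c x w"
  shows "optimal_pair A b c x (\<chi> k. w (Inl k))"
proof -
  have w_eq: "lp_weights A c (\<chi> k. w (Inl k)) = w"
    using w by (intro lp_weights_of_multiplier[symmetric]) (simp add: lp_multiplier_def)
  have "dual_feasible A c (\<chi> k. w (Inl k))"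
    using w by (simp add: dual_feasible_iff_weights w_eq lp_multiplier_def)
  moreover have "(\<chi> k. w (Inl k)) \<bullet> b = c \<bullet> x"
    using w sum_lp_weights_rhs[of A c "\<chi> k. w (Inl k)" b] by (simp add: w_eq lp_multiplier_def)
  ultimately show ?thesis using assms(1) by (simp add: optimal_pair_def)
qed

lemma optimal_pair_iff: "optimal_pair A b c x y \<longleftrightarrow> primal_optimal A b c x \<and> dual_optimal A b c y"
proof
  assume xy: "optimal_pair A b c x y"
  have "c \<bullet> x' \<le> c \<bullet> x" if "primal_feasible A b x'" for x'
    using weak_duality[OF that, of c y] xy by (simp add: optimal_pair_def)
  moreover have "y \<bullet> b \<le> y' \<bullet> b" if "dual_feasible A c y'" for y'
    using weak_duality[OF _ that, of b x] xy by (simp add: optimal_pair_def)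
  ultimately show "primal_optimal A b c x \<and> dual_optimal A b c y"
    using xy by (simp add: optimal_pair_def primal_optimal_def dual_optimal_def)
next
  assume opt: "primal_optimal A b c x \<and> dual_optimal A b c y"
  then obtain w where "lp_multiplier (lp_row A) (lp_rhs b) c x w"
    using optimal_imp_lp_multiplier[of "lp_row A" x "lp_rhs b" c]
    by (auto simp: primal_optimal_def primal_feasible_iff_rows)
  then have pair: "optimal_pair A b c x (\<chi> k. w (Inl k))"
    using opt by (intro lp_multiplier_imp_optimal_pair) (simp add: primal_optimal_def)
  have "y \<bullet> b \<le> (\<chi> k. w (Inl k)) \<bullet> b"
    using opt pair by (simp add: dual_optimal_def optimal_pair_def)
  also have "\<dots> \<le> c \<bullet> x" using pair by (simp add: optimal_pair_def)
  finally show "optimal_pair A b c x y"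
    using opt by (simp add: optimal_pair_def primal_optimal_def dual_optimal_def)
qed

lemma unique_optimal_pair_imp_unique_max:
  assumes "optimal_pair A b c x y" and "\<And>x'. primal_optimal A b c x' \<Longrightarrow> x' = x"
    and "\<forall>r. lp_row A r \<bullet> x' \<le> lp_rhs b r" and "c \<bullet> x \<le> c \<bullet> x'"
  shows "x' = x"
proof (rule assms(2))
  have "primal_optimal A b c x" using assms(1) by (simp add: optimal_pair_iff)
  with assms(3,4) show "primal_optimal A b c x'"
    by (auto simp: primal_optimal_def primal_feasible_iff_rows)
qed

lemma unique_optimal_pair_strictly_complementary:
  assumes xy: "optimal_pair A b c x y"
    and x_uniq: "\<And>x'. primal_optimal A b c x' \<Longrightarrow> x' = x"
    and y_uniq: "\<And>y'. dual_optimal A b c y' \<Longrightarrow> y' = y"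
    and tight: "lp_row A r \<bullet> x = lp_rhs b r"
  shows "0 < lp_weights A c y r"
proof -
  have feas: "primal_feasible A b x" using xy by (simp add: optimal_pair_def)
  obtain w where w: "lp_multiplier (lp_row A) (lp_rhs b) c x w" and "0 < w r"
    using unique_optimum_imp_positive_multiplier[of "lp_row A" x "lp_rhs b" c r]
      feas unique_optimal_pair_imp_unique_max[OF xy x_uniq] tight
    by (auto simp: primal_feasible_iff_rows)
  have "(\<chi> k. w (Inl k)) = y"
    using lp_multiplier_imp_optimal_pair[OF feas w] y_uniq by (simp add: optimal_pair_iff)
  moreover have "lp_weights A c (\<chi> k. w (Inl k)) = w"
    using w by (intro lp_weights_of_multiplier[symmetric]) (simp add: lp_multiplier_def)
  ultimately show ?thesis using \<open>0 < w r\<close> by simp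
qed

lemma unique_optimal_pair_coercive:
  assumes xy: "optimal_pair A b c x y"
    and x_uniq: "\<And>x'. primal_optimal A b c x' \<Longrightarrow> x' = x"
    and y_uniq: "\<And>y'. dual_optimal A b c y' \<Longrightarrow> y' = y"
  shows "\<exists>\<mu>>0. \<forall>d. \<mu> * norm d \<le> dual_seminorm A c y d"
  unfolding dual_seminorm_def
proof (rule strictly_complementary_multiplier_coercive)
  show "\<forall>r. lp_row A r \<bullet> x \<le> lp_rhs b r"
    using xy by (simp add: optimal_pair_def primal_feasible_iff_rows)
  show "lp_multiplier (lp_row A) (lp_rhs b) c x (lp_weights A c y)"
    by (rule optimal_pair_imp_lp_multiplier[OF xy])
qed (use unique_optimal_pair_imp_unique_max[OF xy x_uniq]
      unique_optimal_pair_strictly_complementary[OF xy x_uniq y_uniq] in auto)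

lemma primal_optimum_unchanged_by_rhs_increase:
  fixes A :: "real^'n::finite^'m::finite"
  assumes le: "b1 $ j \<le> b2 $ j" and eq: "\<forall>k. k \<noteq> j \<longrightarrow> b1 $ k = b2 $ k" and y1j: "y1 $ j = 0"
    and xy1: "optimal_pair A b1 c x1 y1" and xy2: "optimal_pair A b2 c x2 y2"
    and coercive: "\<forall>d. norm d \<le> N * dual_seminorm A c y2 d"
  shows "x1 = x2"
proof -
  have feas1: "primal_feasible A b2 x1"
    using xy1 le eq unfolding optimal_pair_def primal_feasible_def by (metis order_trans order_refl)
  have "y1 \<bullet> b1 = y1 \<bullet> b2"
    unfolding inner_vec_def using y1j eq by (intro sum.cong) auto
  moreover have "c \<bullet> x2 \<le> y1 \<bullet> b2"
    using xy1 xy2 by (intro weak_duality[of A]) (simp_all add: optimal_pair_def)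
  ultimately have "c \<bullet> x2 \<le> c \<bullet> x1" using xy1 by (simp add: optimal_pair_def)
  then have "dual_seminorm A c y2 (x1 - x2) = 0"
    unfolding dual_seminorm_def
    using lp_multiplier_seminorm_eq_0[OF optimal_pair_imp_lp_multiplier[OF xy2]] feas1 xy2
    by (simp add: optimal_pair_def primal_feasible_iff_rows)
  then show ?thesis using coercive[rule_format, of "x1 - x2"] by simp
qed

section \<open>Data with a small slack\<close>

text \<open>Uniqueness of the optimum is not a closed condition, but its quantitative form, the
  coercivity of dual_seminorm, is. Bounding everything by N makes the set of certified data a
  countable union of projections of compact sets, hence Borel.\<close>

definition certified_small_slack ::
  "real \<Rightarrow> 'm \<Rightarrow> real \<Rightarrow> real^'n::finite^'m::finite \<Rightarrow> real^'m \<Rightarrow> real^'n \<Rightarrow> real^'n \<Rightarrow> real^'m \<Rightarrow> bool"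
  where
  "certified_small_slack e j N A b c x y \<longleftrightarrow>
     optimal_pair A b c x y \<and> y $ j = 0 \<and> b $ j - (A *v x) $ j \<le> e \<and>
     (\<forall>d. norm d \<le> N * dual_seminorm A c y d) \<and> norm x \<le> N \<and> norm y \<le> N"

definition certificate_set ::
  "real \<Rightarrow> 'm \<Rightarrow> real \<Rightarrow> ((real^('m::finite,'n::finite) lp_index) \<times> (real^'n) \<times> (real^'m)) set" where
  "certificate_set e j N = {(v, x, y). norm v \<le> N \<and>
     certified_small_slack e j N (rA (($) v)) (rb (($) v)) (rc (($) v)) x y}"

definition small_slack_data :: "real \<Rightarrow> 'm \<Rightarrow> (real^('m::finite,'n::finite) lp_index) set" where
  "small_slack_data e j = (\<Union>N::nat. fst ` certificate_set e j (real N))"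

lemma rA_mult_nth: "(rA \<omega> *v x) $ k = (\<Sum>j\<in>UNIV. \<omega> (Inl (k, j)) * x $ j)"
  by (simp add: rA_def matrix_vector_mult_def)

lemma mult_rA_nth: "(y v* rA \<omega>) $ i = (\<Sum>k\<in>UNIV. y $ k * \<omega> (Inl (k, i)))"
  by (simp add: rA_def vector_matrix_mult_def)

lemma rb_nth: "rb \<omega> $ k = \<omega> (Inr (Inl k))" and rc_nth: "rc \<omega> $ i = \<omega> (Inr (Inr i))"
  by (simp_all add: rb_def rc_def)

lemma dual_seminorm_eq:
  "dual_seminorm A c y d =
     (\<Sum>k\<in>UNIV. y $ k * \<bar>(A *v d) $ k\<bar>) + (\<Sum>i\<in>UNIV. ((y v* A) $ i - c $ i) * \<bar>d $ i\<bar>)"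
  by (simp add: dual_seminorm_def sum_UNIV_Plus)

lemma compact_certificate_set: "compact (certificate_set e j N)"
proof -
  have "closed (certificate_set e j N)"
    unfolding certificate_set_def certified_small_slack_def optimal_pair_def primal_feasible_def
      dual_feasible_def dual_seminorm_eq rA_mult_nth mult_rA_nth rb_nth rc_nth inner_vec_def
      case_prod_unfold
    by ((intro closed_Collect_conj closed_Collect_all); (intro closed_Collect_le closed_Collect_eq);
        (intro continuous_intros))
  moreover have "certificate_set e j N \<subseteq> cball 0 N \<times> cball 0 N \<times> cball 0 N"
    by (auto simp: certificate_set_def certified_small_slack_def)
  ultimately show ?thesis
    using compact_Int_closed[OF compact_Times[OF compact_cball compact_Times[OF compact_cball compact_cball]]]
    by (metis inf.absorb_iff2)
qed

lemma small_slack_data_borel: "small_slack_data e j \<in> sets borel"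
proof -
  have "fst ` certificate_set e j (real N) \<in> sets borel" for N :: nat
    by (intro borel_closed compact_imp_closed compact_continuous_image continuous_intros
        compact_certificate_set)
  then show ?thesis unfolding small_slack_data_def by blast
qed

lemma small_slack_data_rhs_increase:
  fixes v1 v2 :: "real^('m::finite,'n::finite) lp_index"
  assumes v1: "v1 \<in> small_slack_data e j" and v2: "v2 \<in> small_slack_data e j"
    and eq: "\<forall>k. k \<noteq> Inr (Inl j) \<longrightarrow> v1 $ k = v2 $ k"
    and le: "v1 $ Inr (Inl j) \<le> v2 $ Inr (Inl j)"
  shows "v2 $ Inr (Inl j) - v1 $ Inr (Inl j) \<le> e"
proof -
  define A where "A = rA (($) v2)"
  define c where "c = rc (($) v2)"
  define b1 where "b1 = rb (($) v1)"
  define b2 where "b2 = rb (($) v2)"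
  have "rA (($) v1) = A" "rc (($) v1) = c" using eq by (simp_all add: A_def c_def rA_def rc_def)
  then obtain N1 x1 y1 where cert1: "certified_small_slack e j N1 A b1 c x1 y1"
    using v1 by (auto simp: small_slack_data_def certificate_set_def b1_def)
  obtain N2 x2 y2 where cert2: "certified_small_slack e j N2 A b2 c x2 y2"
    using v2 by (auto simp: small_slack_data_def certificate_set_def A_def b2_def c_def)
  have "x1 = x2"
  proof (rule primal_optimum_unchanged_by_rhs_increase)
    show "b1 $ j \<le> b2 $ j" "\<forall>k. k \<noteq> j \<longrightarrow> b1 $ k = b2 $ k"
      using le eq by (simp_all add: b1_def b2_def rb_nth)
  qed (use cert1 cert2 in \<open>auto simp: certified_small_slack_def\<close>)
  moreover have "(A *v x1) $ j \<le> b1 $ j"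
    using cert1 by (simp add: certified_small_slack_def optimal_pair_def primal_feasible_def)
  ultimately show ?thesis
    using cert2 by (simp add: certified_small_slack_def b1_def b2_def rb_nth)
qed

lemma small_slack_data_thin:
  fixes v1 v2 :: "real^('m::finite,'n::finite) lp_index"
  assumes "v1 \<in> small_slack_data e j" and "v2 \<in> small_slack_data e j"
    and "\<forall>k. k \<noteq> Inr (Inl j) \<longrightarrow> v1 $ k = v2 $ k"
  shows "\<bar>v1 $ Inr (Inl j) - v2 $ Inr (Inl j)\<bar> \<le> e"
  using small_slack_data_rhs_increase[OF assms] small_slack_data_rhs_increase[OF assms(2,1)] assms(3)
  by (cases "v1 $ Inr (Inl j) \<le> v2 $ Inr (Inl j)") auto

lemma betaP_le_imp_small_slack_row:
  assumes "betaP A b c \<le> ereal e"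
  shows "\<exists>j. opt_y A b c $ j = 0 \<and> b $ j - (A *v opt_x A b c) $ j \<le> e"
proof -
  define J where "J = {j. opt_y A b c $ j = 0}"
  have beta_eq: "betaP A b c = (INF j\<in>J. ereal (b $ j - (A *v opt_x A b c) $ j))"
    by (simp add: betaP_def J_def)
  with assms have "J \<noteq> {}" by (auto simp: top_ereal_def)
  then have "betaP A b c \<in> (\<lambda>j. ereal (b $ j - (A *v opt_x A b c) $ j)) ` J"
    unfolding beta_eq by (simp add: cInf_eq_Min)
  with assms show ?thesis by (auto simp: J_def)
qed

lemma betaP_le_imp_small_slack_data:
  fixes v :: "real^('m::finite,'n::finite) lp_index"
  defines "A \<equiv> rA (($) v)" and "b \<equiv> rb (($) v)" and "c \<equiv> rc (($) v)"
  assumes ux: "\<exists>!x. primal_optimal A b c x" and uy: "\<exists>!y. dual_optimal A b c y"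
    and beta: "betaP A b c \<le> ereal e"
  shows "\<exists>j. v \<in> small_slack_data e j"
proof -
  define x where "x = opt_x A b c"
  define y where "y = opt_y A b c"
  have xo: "primal_optimal A b c x" and yo: "dual_optimal A b c y"
    unfolding x_def y_def opt_x_def opt_y_def using theI'[OF ux] theI'[OF uy] by auto
  have x_uniq: "\<And>x'. primal_optimal A b c x' \<Longrightarrow> x' = x"
    and y_uniq: "\<And>y'. dual_optimal A b c y' \<Longrightarrow> y' = y"
    using ux uy xo yo by blast+
  have xy: "optimal_pair A b c x y" using xo yo by (simp add: optimal_pair_iff)
  obtain j where "y $ j = 0" "b $ j - (A *v x) $ j \<le> e"
    using betaP_le_imp_small_slack_row[OF beta] by (auto simp: x_def y_def)
  moreover obtain \<mu> where "0 < \<mu>" and \<mu>: "\<forall>d. \<mu> * norm d \<le> dual_seminorm A c y d"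
    using unique_optimal_pair_coercive[OF xy x_uniq y_uniq] by blast
  obtain N :: nat where N: "max (max (1 / \<mu>) (norm v)) (max (norm x) (norm y)) \<le> real N"
    using real_arch_simple by blast
  have "norm d \<le> real N * dual_seminorm A c y d" for d
  proof -
    have "norm d \<le> (1 / \<mu>) * dual_seminorm A c y d"
      using \<mu> \<open>0 < \<mu>\<close> by (simp add: field_simps mult.commute)
    also have "\<dots> \<le> real N * dual_seminorm A c y d"
      using N order_trans[OF mult_nonneg_nonneg \<mu>[rule_format, of d]] \<open>0 < \<mu>\<close>
      by (intro mult_right_mono) auto
    finally show ?thesis .
  qed
  ultimately have "certified_small_slack e j (real N) A b c x y"
    using xy N by (simp add: certified_small_slack_def)
  then have "(v, x, y) \<in> certificate_set e j (real N)"
    using N by (simp add: certificate_set_def A_def b_def c_def)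
  then show ?thesis unfolding small_slack_data_def by force
qed

lemma betaP_event_subset_small_slack_data:
  fixes s :: "(('m::finite, 'n::finite) lp_index \<Rightarrow> real) \<Rightarrow> real"
  assumes "0 < \<epsilon>"
  shows "{\<omega>. (\<exists>!x. primal_optimal (rA \<omega>) (rb \<omega>) (rc \<omega>) x) \<and>
      (\<exists>!y. dual_optimal (rA \<omega>) (rb \<omega>) (rc \<omega>) y) \<and>
      betaP (rA \<omega>) (rb \<omega>) (rc \<omega>) \<le> ereal (\<epsilon> / max 1 (s \<omega>))}
    \<subseteq> (\<Union>j. vec_lambda -` small_slack_data \<epsilon> j)" (is "?event \<subseteq> _")
proof
  fix \<omega> assume \<omega>: "\<omega> \<in> ?event"
  then have "betaP (rA \<omega>) (rb \<omega>) (rc \<omega>) \<le> ereal (\<epsilon> / max 1 (s \<omega>))" by blast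
  also have "\<dots> \<le> ereal \<epsilon>"
    using assms by (simp add: divide_le_eq mult_le_cancel_left1)
  finally have "\<exists>j. vec_lambda \<omega> \<in> small_slack_data \<epsilon> j"
    using betaP_le_imp_small_slack_data[of "vec_lambda \<omega>" \<epsilon>] \<omega> by (simp add: vec_lambda_inverse)
  then show "\<omega> \<in> (\<Union>j. vec_lambda -` small_slack_data \<epsilon> j)" by simp
qed

section \<open>Gaussian measure of thin sets\<close>

lemma normal_density_le: "0 < \<sigma> \<Longrightarrow> normal_density \<mu> \<sigma> x \<le> 1 / \<sigma>"
proof -
  assume "0 < \<sigma>"
  have "\<sigma> \<le> sqrt (2 * pi) * \<sigma>" using \<open>0 < \<sigma>\<close> pi_gt3 by simp
  also have "\<dots> = sqrt (2 * pi * \<sigma>\<^sup>2)" using \<open>0 < \<sigma>\<close> by (simp add: real_sqrt_mult)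
  finally have sqrt_ge: "\<sigma> \<le> sqrt (2 * pi * \<sigma>\<^sup>2)" .
  have "normal_density \<mu> \<sigma> x \<le> 1 / sqrt (2 * pi * \<sigma>\<^sup>2) * 1"
    unfolding normal_density_def by (intro mult_left_mono) auto
  also have "\<dots> \<le> 1 / \<sigma>" using sqrt_ge \<open>0 < \<sigma>\<close> by (simp add: frac_le)
  finally show ?thesis .
qed

lemma emeasure_normal_interval_le:
  assumes "0 < \<sigma>" and "a \<le> b"
  shows "emeasure (density lborel (\<lambda>x. ennreal (normal_density \<mu> \<sigma> x))) {a..b} \<le> ennreal ((b - a) / \<sigma>)"
proof -
  have "emeasure (density lborel (\<lambda>x. ennreal (normal_density \<mu> \<sigma> x))) {a..b}
      = (\<integral>\<^sup>+ x. ennreal (normal_density \<mu> \<sigma> x) * indicator {a..b} x \<partial>lborel)"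
    by (rule emeasure_density) auto
  also have "\<dots> \<le> (\<integral>\<^sup>+ x. ennreal (1 / \<sigma>) * indicator {a..b} x \<partial>lborel)"
    using normal_density_le[OF assms(1)]
    by (intro nn_integral_mono) (auto simp: indicator_def intro: ennreal_leI)
  also have "\<dots> = ennreal ((b - a) / \<sigma>)"
    using assms by (simp add: nn_integral_cmult_indicator ennreal_mult'[symmetric])
  finally show ?thesis .
qed

lemma emeasure_normal_product_thin_le:
  fixes \<mu> :: "'i::finite \<Rightarrow> real" and \<sigma> :: real
  defines "M \<equiv> PiM UNIV (\<lambda>k. density lborel (\<lambda>x. ennreal (normal_density (\<mu> k) \<sigma> x)))"
  assumes "0 < \<sigma>" and "0 \<le> e" and S: "S \<in> sets M"
    and thin: "\<And>x s t. x(k0 := s) \<in> S \<Longrightarrow> x(k0 := t) \<in> S \<Longrightarrow> \<bar>s - t\<bar> \<le> e"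
  shows "emeasure M S \<le> ennreal (2 * e / \<sigma>)"
proof -
  define Mk where "Mk = (\<lambda>k. density lborel (\<lambda>x. ennreal (normal_density (\<mu> k) \<sigma> x)))"
  have prob: "prob_space (Mk k)" for k
    unfolding Mk_def using \<open>0 < \<sigma>\<close> by (simp add: prob_space_normal_density)
  interpret product_sigma_finite Mk
    unfolding product_sigma_finite_def using prob prob_space_imp_sigma_finite by blast
  have M_eq: "M = PiM (insert k0 (UNIV - {k0})) Mk"
    by (simp add: M_def Mk_def insert_absorb)
  have slice: "(\<integral>\<^sup>+ s. indicator S (x(k0 := s)) \<partial>Mk k0) \<le> ennreal (2 * e / \<sigma>)" for x
  proof (cases "\<exists>s0. x(k0 := s0) \<in> S")
    case True
    then obtain s0 where "x(k0 := s0) \<in> S" by blast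
    with thin have "indicator S (x(k0 := s)) \<le> (indicator {s0 - e..s0 + e} s :: ennreal)" for s
      by (force simp: indicator_def abs_le_iff)
    then have "(\<integral>\<^sup>+ s. indicator S (x(k0 := s)) \<partial>Mk k0) \<le> (\<integral>\<^sup>+ s. indicator {s0 - e..s0 + e} s \<partial>Mk k0)"
      by (intro nn_integral_mono)
    also have "\<dots> = emeasure (Mk k0) {s0 - e..s0 + e}"
      by (simp add: Mk_def)
    also have "\<dots> \<le> ennreal (2 * e / \<sigma>)"
      using emeasure_normal_interval_le[OF \<open>0 < \<sigma>\<close>, of "s0 - e" "s0 + e" "\<mu> k0"] \<open>0 \<le> e\<close>
      by (simp add: Mk_def)
    finally show ?thesis .
  qed simp
  have "emeasure M S = (\<integral>\<^sup>+ x. indicator S x \<partial>M)"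
    using S by simp
  also have "\<dots> = (\<integral>\<^sup>+ x. (\<integral>\<^sup>+ s. indicator S (x(k0 := s)) \<partial>Mk k0) \<partial>PiM (UNIV - {k0}) Mk)"
    unfolding M_eq by (rule product_nn_integral_insert) (use S M_eq in auto)
  also have "\<dots> \<le> (\<integral>\<^sup>+ x. ennreal (2 * e / \<sigma>) \<partial>PiM (UNIV - {k0}) Mk)"
    by (intro nn_integral_mono slice)
  also have "\<dots> = ennreal (2 * e / \<sigma>)"
    using prob_space.emeasure_space_1[of "PiM (UNIV - {k0}) Mk"] prob_space_PiM[of "UNIV - {k0}" Mk] prob
    by simp
  finally show ?thesis .
qed

lemma vec_lambda_measurable_gauss_perturb:
  "vec_lambda \<in> borel_measurable (gauss_perturb A b c \<sigma>)"
proof -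
  have "(\<lambda>\<omega>. vec_lambda \<omega> \<bullet> i) \<in> borel_measurable (gauss_perturb A b c \<sigma>)" if "i \<in> Basis" for i
  proof -
    from that obtain k where "i = axis k 1" by (auto simp: Basis_vec_def)
    then have "(\<lambda>\<omega>. vec_lambda \<omega> \<bullet> i) = (\<lambda>\<omega>. \<omega> k)"
      by (simp add: cart_eq_inner_axis[symmetric])
    moreover have "(\<lambda>\<omega>. \<omega> k) \<in> borel_measurable (gauss_perturb A b c \<sigma>)"
      unfolding gauss_perturb_def by measurable
    ultimately show ?thesis by simp
  qed
  then show ?thesis by (subst borel_measurable_euclidean_space) blast
qed

lemma small_slack_event_sets:
  "vec_lambda -` small_slack_data e j \<in> sets (gauss_perturb A b c \<sigma>)"
proof -
  have "space (gauss_perturb A b c \<sigma>) = UNIV" by (simp add: gauss_perturb_def space_PiM)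
  then show ?thesis
    using measurable_sets[OF vec_lambda_measurable_gauss_perturb[of A b c \<sigma>]
        small_slack_data_borel[of e j]] by simp
qed

lemma measure_small_slack_event_le:
  fixes A :: "real^'n::finite^'m::finite"
  assumes "0 < \<sigma>" and "0 \<le> e"
  shows "measure (gauss_perturb A b c \<sigma>) (vec_lambda -` small_slack_data e j) \<le> 2 * e / \<sigma>"
proof -
  interpret prob_space "gauss_perturb A b c \<sigma>"
    unfolding gauss_perturb_def using assms(1) by (intro prob_space_PiM prob_space_normal_density)
  have "emeasure (gauss_perturb A b c \<sigma>) (vec_lambda -` small_slack_data e j) \<le> ennreal (2 * e / \<sigma>)"
    unfolding gauss_perturb_def
  proof (rule emeasure_normal_product_thin_le[OF assms])
    show "vec_lambda -` small_slack_data e j \<in> sets (PiM UNIV (\<lambda>k. density lborel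
        (\<lambda>x. ennreal (normal_density (lp_mean A b c k) \<sigma> x))))"
      using small_slack_event_sets[of e j A b c \<sigma>] by (simp add: gauss_perturb_def)
    fix x :: "('m, 'n) lp_index \<Rightarrow> real" and s t
    assume "x(Inr (Inl j) := s) \<in> vec_lambda -` small_slack_data e j"
      and "x(Inr (Inl j) := t) \<in> vec_lambda -` small_slack_data e j"
    then show "\<bar>s - t\<bar> \<le> e"
      using small_slack_data_thin[of "vec_lambda (x(Inr (Inl j) := s))" e j
          "vec_lambda (x(Inr (Inl j) := t))"] by simp
  qed
  then show ?thesis
    using assms by (simp add: emeasure_eq_measure ennreal_le_iff)
qed

lemma measure_small_slack_events_le:
  fixes A :: "real^'n::finite^'m::finite"
  assumes "0 < \<sigma>" and "0 \<le> e"
  shows "measure (gauss_perturb A b c \<sigma>) (\<Union>j. vec_lambda -` small_slack_data e j)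
    \<le> 2 * e * real CARD('m) / \<sigma>"
proof -
  interpret prob_space "gauss_perturb A b c \<sigma>"
    unfolding gauss_perturb_def using assms(1) by (intro prob_space_PiM prob_space_normal_density)
  have "measure (gauss_perturb A b c \<sigma>) (\<Union>j. vec_lambda -` small_slack_data e j)
      \<le> (\<Sum>j\<in>UNIV. measure (gauss_perturb A b c \<sigma>) (vec_lambda -` small_slack_data e j))"
    using small_slack_event_sets by (intro measure_UNION_le) auto
  also have "\<dots> \<le> (\<Sum>j\<in>(UNIV :: 'm set). 2 * e / \<sigma>)"
    using assms by (intro sum_mono measure_small_slack_event_le)
  finally show ?thesis by (simp add: field_simps)
qed

theorem mainTheorem6:
  fixes Abar :: "real^'n::finite^'m::finite" and bbar :: "real^'m" and cbar :: "real^'n"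
    and \<sigma> \<epsilon> :: real
  assumes "CARD('n) \<le> CARD('m)"
    and "spec_norm Abar \<le> 1" and "norm bbar \<le> 1" and "norm cbar \<le> 1"
    and "0 < \<sigma>" and "\<sigma>\<^sup>2 \<le> 1"
    and "0 < \<epsilon>"
  shows "\<exists>S \<in> sets (gauss_perturb Abar bbar cbar \<sigma>).
     {\<omega> \<in> space (gauss_perturb Abar bbar cbar \<sigma>).
        lp_feasible_bounded (rA \<omega>) (rb \<omega>) (rc \<omega>) \<and>
        (\<exists>!x. primal_optimal (rA \<omega>) (rb \<omega>) (rc \<omega>) x) \<and>
        (\<exists>!y. dual_optimal (rA \<omega>) (rb \<omega>) (rc \<omega>) y) \<and>
        betaP (rA \<omega>) (rb \<omega>) (rc \<omega>) \<le>
          ereal (\<epsilon> / max 1 (spec_norm (rA \<omega>) * norm (opt_x (rA \<omega>) (rb \<omega>) (rc \<omega>))))}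
       \<subseteq> S \<and>
     measure (gauss_perturb Abar bbar cbar \<sigma>) S \<le> 4 * \<epsilon> * real CARD('m) / \<sigma>\<^sup>2"
proof -
  define S :: "(('m, 'n) lp_index \<Rightarrow> real) set"
    where "S = (\<Union>j. vec_lambda -` small_slack_data \<epsilon> j)"
  have "S \<in> sets (gauss_perturb Abar bbar cbar \<sigma>)"
    unfolding S_def using small_slack_event_sets by (intro sets.finite_UN) auto
  moreover have "{\<omega> \<in> space (gauss_perturb Abar bbar cbar \<sigma>).
        lp_feasible_bounded (rA \<omega>) (rb \<omega>) (rc \<omega>) \<and>
        (\<exists>!x. primal_optimal (rA \<omega>) (rb \<omega>) (rc \<omega>) x) \<and>
        (\<exists>!y. dual_optimal (rA \<omega>) (rb \<omega>) (rc \<omega>) y) \<and>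
        betaP (rA \<omega>) (rb \<omega>) (rc \<omega>) \<le>
          ereal (\<epsilon> / max 1 (spec_norm (rA \<omega>) * norm (opt_x (rA \<omega>) (rb \<omega>) (rc \<omega>))))} \<subseteq> S"
    unfolding S_def
    by (rule order_trans[OF _ betaP_event_subset_small_slack_data[OF \<open>0 < \<epsilon>\<close>]]) auto
  moreover have "measure (gauss_perturb Abar bbar cbar \<sigma>) S \<le> 4 * \<epsilon> * real CARD('m) / \<sigma>\<^sup>2"
  proof -
    have "\<sigma> \<le> 1" using assms(5,6) power2_le_imp_le[of \<sigma> 1] by simp
    have "measure (gauss_perturb Abar bbar cbar \<sigma>) S \<le> 2 * \<epsilon> * real CARD('m) / \<sigma>"
      unfolding S_def using assms(5,7) by (intro measure_small_slack_events_le) auto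
    also have "\<dots> = 2 * \<epsilon> * real CARD('m) * \<sigma> / \<sigma>\<^sup>2"
      using \<open>0 < \<sigma>\<close> by (simp add: power2_eq_square)
    also have "\<dots> \<le> 4 * \<epsilon> * real CARD('m) / \<sigma>\<^sup>2"
      using \<open>\<sigma> \<le> 1\<close> \<open>0 < \<epsilon>\<close> by (intro divide_right_mono) auto
    finally show ?thesis .
  qed
  ultimately show ?thesis by (intro bexI[of _ S] conjI)
qed

end
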